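(* Let $0<\gamma\le\frac{1-\beta}{(1+\beta)^2\Phi_{\max}^2}$, let $z_0=\theta_0-\theta^\star$, and for $t\ge1$ let $C^{t:1}=(I-\gamma a_t)(I-\gamma a_{t-1})\cdots(I-\gamma a_1)$. Then for all $t\ge1$, $$\mathbb E\big[\|C^{t:1}z_0\|_2^2\big]\le(1-\gamma(1-\beta)\mu')^t\,\mathbb E\big[\|z_0\|_2^2\big]\le\exp(-\gamma(1-\beta)\mu't)\,\mathbb E\big[\|z_0\|_2^2\big].$$
   Context: Setting. Let $\mathcal S=\{1,\dots,n\}$ be a finite state space and $\mathcal A$ a finite action space; fix a stationary randomized policy $\pi$, transition probabilities $P(s'|s,a)$, a reward function $r$ with $|r(s,a)|\le R_{\max}$, and a discount factor $\beta\in(0,1)$. Let $P^\pi(s,s')=\sum_a\pi(s,a)P(s'|s,a)$, assumed irreducible with stationary distribution $\rho$, $D=\mathrm{diag}(\rho)$. Features $\phi:\mathcal S\to\mathbb R^d$ with $\|\phi(s)\|_2\le\Phi_{\max}$, $\Phi\in\mathbb R^{n\times d}$ with rows $\phi(s)^\top$ of full column rank, $R(s)=\sum_a\pi(s,a)r(s,a)$, $A=\Phi^\top D(I-\beta P^\pi)\Phi$, $b=\Phi^\top DR$, $\theta^\star=A^{-1}b$, $B=\sum_s\rho(s)\phi(s)\phi(s)^\top$ with minimum eigenvalue $\mu'>0$. Samples $(s_t,a_t,r_t,s'_t)_{t\ge1}$ i.i.d. with $s_t\sim\rho$, $a_t\sim\pi(s_t,\cdot)$, $r_t=r(s_t,a_t)$,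 $s'_t\sim P(\cdot|s_t,a_t)$, independent of the initial parameter $\theta_0$; $a_t=\phi(s_t)\phi(s_t)^\top-\beta\phi(s_t)\phi(s'_t)^\top$. *)

theory Defs
  imports "HOL-Probability.Probability"
begin

definition outer :: "real^'d \<Rightarrow> real^'d \<Rightarrow> real^'d^'d" where
  "outer u v = (\<chi> i j. u $ i * v $ j)"

definition Ppi :: "('s::finite \<Rightarrow> 'a::finite \<Rightarrow> real) \<Rightarrow> ('s \<Rightarrow> 'a \<Rightarrow> 's \<Rightarrow> real) \<Rightarrow> real^'s^'s" where
  "Ppi pol P = (\<chi> s s'. \<Sum>a\<in>UNIV. pol s a * P s a s')"

definition Rvec :: "('s::finite \<Rightarrow> 'a::finite \<Rightarrow> real) \<Rightarrow> ('s \<Rightarrow> 'a \<Rightarrow> real) \<Rightarrow> real^'s" where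
  "Rvec pol r = (\<chi> s. \<Sum>a\<in>UNIV. pol s a * r s a)"

definition Phimat :: "('s::finite \<Rightarrow> real^'d) \<Rightarrow> real^'d^'s" where
  "Phimat phi = (\<chi> s. phi s)"

definition Dmat :: "('s::finite \<Rightarrow> real) \<Rightarrow> real^'s^'s" where
  "Dmat rho = (\<chi> i j. if i = j then rho i else 0)"

definition Amat where
  "Amat pol P rho phi beta =
     transpose (Phimat phi) ** Dmat rho ** (mat 1 - beta *\<^sub>R Ppi pol P) ** Phimat phi"

definition bvec where
  "bvec pol r rho phi = (transpose (Phimat phi) ** Dmat rho) *v Rvec pol r"

definition theta_star where
  "theta_star pol P r rho phi beta = matrix_inv (Amat pol P rho phi beta) *v bvec pol r rho phi"

definition Bmat :: "('s::finite \<Rightarrow> real) \<Rightarrow> ('s \<Rightarrow> real^'d::finite) \<Rightarrow> real^'d^'d" where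
  "Bmat rho phi = (\<Sum>s\<in>UNIV. rho s *\<^sub>R outer (phi s) (phi s))"

definition min_eigenvalue :: "real^'d::finite^'d \<Rightarrow> real" where
  "min_eigenvalue M = Min {l. \<exists>v. v \<noteq> 0 \<and> M *v v = l *\<^sub>R v}"

definition a_mat :: "('s \<Rightarrow> real^'d::finite) \<Rightarrow> real \<Rightarrow> 's \<times> 'a \<times> 's \<Rightarrow> real^'d^'d" where
  "a_mat phi beta x = (case x of (s, a, s') \<Rightarrow> outer (phi s) (phi s) - beta *\<^sub>R outer (phi s) (phi s'))"

primrec Cprod :: "('s \<Rightarrow> real^'d::finite) \<Rightarrow> real \<Rightarrow> real \<Rightarrow> (nat \<Rightarrow> 's \<times> 'a \<times> 's) \<Rightarrow> nat \<Rightarrow> real^'d^'d" where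
  "Cprod phi beta gamma w 0 = mat 1"
| "Cprod phi beta gamma w (Suc t) = (mat 1 - gamma *\<^sub>R a_mat phi beta (w (Suc t))) ** Cprod phi beta gamma w t"

end

theory Submission
  imports Defs
begin

text \<open>For fixed \<open>y\<close>, expanding \<open>norm ((I - g a) y)^2\<close> and bounding the cross term
  \<open>beta (phi s \<bullet> y) (phi s' \<bullet> y)\<close> by AM-GM leaves only the squares \<open>(phi s \<bullet> y)^2\<close> and
  \<open>(phi s' \<bullet> y)^2\<close>. Both \<open>s\<close> and \<open>s'\<close> have law \<open>rho\<close> (the latter by stationarity), so in
  expectation both become \<open>y \<bullet> B y \<ge> mu' (norm y)^2\<close>, and the step size condition yields
  \<open>E (norm ((I - g a) y)^2) \<le> (1 - g (1 - beta) mu') (norm y)^2\<close>. Since the samples are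
  independent, integrating out the newest sample first iterates this bound along the product
  \<open>Cprod\<close>; Tonelli over the initial parameter and \<open>1 + x \<le> exp x\<close> finish the proof.\<close>

lemma outer_mult_vector: "outer u v *v y = (v \<bullet> y) *\<^sub>R u"
  by (simp add: vec_eq_iff outer_def matrix_vector_mult_def inner_vec_def sum_distrib_left mult_ac)

lemma a_mat_mult_vector:
  "a_mat phi beta (s, a, s') *v y = ((phi s - beta *\<^sub>R phi s') \<bullet> y) *\<^sub>R phi s"
  by (simp add: a_mat_def matrix_vector_mult_diff_rdistrib outer_mult_vector
      scaleR_matrix_vector_assoc[symmetric] inner_diff_left algebra_simps)

lemma norm_td_step_sq_le:
  fixes y :: "real^'d::finite"
  assumes "norm (phi s) \<le> Phimax" "0 < g" "0 < beta"
  shows "(norm ((mat 1 - g *\<^sub>R a_mat phi beta (s, a, s')) *v y))^2 \<le>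
    (norm y)^2 + (- 2 * g + g * beta + g^2 * Phimax^2 * (1 + beta)) * (phi s \<bullet> y)^2
      + (g * beta + g^2 * Phimax^2 * (1 + beta) * beta) * (phi s' \<bullet> y)^2"
proof -
  define X X' where "X = phi s \<bullet> y" and "X' = phi s' \<bullet> y"
  define c where "c = X - beta * X'"
  have cross: "- 2 * g * c * X \<le> - 2 * g * X^2 + g * beta * (X^2 + X'^2)"
  proof -
    have "g * beta * (2 * X * X') \<le> g * beta * (X^2 + X'^2)"
      using assms by (intro mult_left_mono) (auto simp: sum_squares_bound)
    then show ?thesis by (simp add: c_def algebra_simps power2_eq_square)
  qed
  have "c^2 \<le> (1 + beta) * (X^2 + beta * X'^2)"
    using mult_nonneg_nonneg[OF less_imp_le[OF \<open>0 < beta\<close>] zero_le_power2[of "X + X'"]]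
    by (simp add: c_def algebra_simps power2_eq_square)
  then have "g^2 * Phimax^2 * c^2 \<le> g^2 * Phimax^2 * ((1 + beta) * (X^2 + beta * X'^2))"
    by (intro mult_left_mono) auto
  moreover have "g^2 * c^2 * (norm (phi s))^2 \<le> g^2 * c^2 * Phimax^2"
    using assms(1) by (intro mult_left_mono power_mono) auto
  ultimately have quad: "g^2 * c^2 * (norm (phi s))^2 \<le> g^2 * Phimax^2 * ((1 + beta) * (X^2 + beta * X'^2))"
    by (simp add: mult_ac)
  have "(norm ((mat 1 - g *\<^sub>R a_mat phi beta (s, a, s')) *v y))^2 = (norm (y - (g * c) *\<^sub>R phi s))^2"
    by (simp add: matrix_vector_mult_diff_rdistrib scaleR_matrix_vector_assoc[symmetric]
        a_mat_mult_vector c_def X_def X'_def inner_diff_left)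
  also have "\<dots> = (norm y)^2 - 2 * g * c * X + g^2 * c^2 * (norm (phi s))^2"
    unfolding power2_norm_eq_inner X_def
    by (simp add: inner_diff_left inner_diff_right inner_commute algebra_simps power2_eq_square)
  also have "\<dots> \<le> (norm y)^2 + (- 2 * g * X^2 + g * beta * (X^2 + X'^2))
      + g^2 * Phimax^2 * ((1 + beta) * (X^2 + beta * X'^2))"
    using cross quad by linarith
  also have "\<dots> = (norm y)^2 + (- 2 * g + g * beta + g^2 * Phimax^2 * (1 + beta)) * X^2
      + (g * beta + g^2 * Phimax^2 * (1 + beta) * beta) * X'^2"
    by (simp add: algebra_simps)
  finally show ?thesis
    by (simp only: X_def X'_def)
qed

lemma symmetric_matrix_inner:
  fixes M :: "real^'n^'n"
  assumes "transpose M = M"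
  shows "(M *v x) \<bullet> y = x \<bullet> (M *v y)"
proof -
  have "(M *v x) \<bullet> y = (x v* transpose M) \<bullet> y" by simp
  also have "\<dots> = x \<bullet> (M *v y)" by (simp only: dot_lmul_matrix assms)
  finally show ?thesis .
qed

lemma finite_eigenvalues_symmetric:
  fixes M :: "real^'n^'n"
  assumes "transpose M = M"
  shows "finite {l. \<exists>v. v \<noteq> 0 \<and> M *v v = l *\<^sub>R v}" (is "finite ?E")
proof -
  define ev where "ev l = (SOME v. v \<noteq> 0 \<and> M *v v = l *\<^sub>R v)" for l
  have ev: "ev l \<noteq> 0 \<and> M *v ev l = l *\<^sub>R ev l" if "l \<in> ?E" for l
    unfolding ev_def using that someI_ex[of "\<lambda>v. v \<noteq> 0 \<and> M *v v = l *\<^sub>R v"] by auto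
  have inj: "inj_on ev ?E"
  proof (rule inj_onI)
    fix l1 l2 assume l: "l1 \<in> ?E" "l2 \<in> ?E" "ev l1 = ev l2"
    have "l1 *\<^sub>R ev l1 = l2 *\<^sub>R ev l1" using ev[OF l(1)] ev[OF l(2)] l(3) by metis
    then show "l1 = l2" using ev[OF l(1)] by simp
  qed
  have orth: "orthogonal (ev l1) (ev l2)" if l: "l1 \<in> ?E" "l2 \<in> ?E" "ev l1 \<noteq> ev l2" for l1 l2
  proof -
    have "l1 * (ev l1 \<bullet> ev l2) = (M *v ev l1) \<bullet> ev l2" using ev[OF l(1)] by simp
    also have "\<dots> = ev l1 \<bullet> (M *v ev l2)" by (rule symmetric_matrix_inner[OF assms])
    also have "\<dots> = l2 * (ev l1 \<bullet> ev l2)" using ev[OF l(2)] by simp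
    finally have "(l1 - l2) * (ev l1 \<bullet> ev l2) = 0" by (simp add: algebra_simps)
    moreover have "l1 \<noteq> l2" using l(3) by auto
    ultimately show ?thesis by (simp add: orthogonal_def)
  qed
  have "pairwise orthogonal (ev ` ?E)" using orth by (auto simp: pairwise_def)
  moreover have "0 \<notin> ev ` ?E" using ev by force
  ultimately have "independent (ev ` ?E)" by (rule pairwise_orthogonal_independent)
  then have "finite (ev ` ?E)" by (rule independent_imp_finite)
  then show ?thesis using inj by (rule finite_imageD)
qed

lemma symmetric_quadratic_form_add:
  fixes M :: "real^'n^'n"
  assumes "transpose M = M"
  shows "(v + e *\<^sub>R d) \<bullet> (M *v (v + e *\<^sub>R d))
    = v \<bullet> (M *v v) + 2 * e * (d \<bullet> (M *v v)) + e^2 * (d \<bullet> (M *v d))"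
proof -
  have "v \<bullet> (M *v d) = d \<bullet> (M *v v)"
    using symmetric_matrix_inner[OF assms, of v d] by (simp add: inner_commute)
  then show ?thesis
    by (simp add: matrix_vector_right_distrib matrix_vector_mult_scaleR inner_add_left
        inner_add_right algebra_simps power2_eq_square)
qed

lemma nonneg_quadratic_linear_coeff_zero:
  fixes a b :: real
  assumes "0 \<le> a" "0 \<le> b" and nonneg: "\<And>e. 0 \<le> 2 * e * a + e^2 * b"
  shows "a = 0"
proof (rule ccontr)
  assume "a \<noteq> 0"
  have "0 \<le> 2 * (- a / (b + 1)) * a + (- a / (b + 1))^2 * b" by (rule nonneg)
  also have "\<dots> = a^2 * (- b - 2) / (b + 1)^2"
    using assms(2) by (simp add: divide_simps) algebra
  also have "\<dots> < 0"
    using assms(1,2) \<open>a \<noteq> 0\<close> by (intro divide_neg_pos mult_pos_neg) auto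
  finally show False by simp
qed

text \<open>A minimiser \<open>v\<close> of the Rayleigh quotient on the unit sphere is an eigenvector:
  otherwise moving along the residual \<open>M v - m v\<close> would decrease the quotient to first order.\<close>
lemma symmetric_matrix_rayleigh_eigenvalue:
  fixes M :: "real^'n^'n"
  assumes sym: "transpose M = M"
  obtains m v where "v \<noteq> 0" "M *v v = m *\<^sub>R v" "\<And>y. m * (norm y)^2 \<le> y \<bullet> (M *v y)"
proof -
  have "continuous_on (sphere 0 1) (\<lambda>y. y \<bullet> (M *v y))"
    unfolding matrix_vector_mult_def by (intro continuous_intros)
  then have "\<exists>v\<in>sphere 0 1. \<forall>y\<in>sphere 0 1. v \<bullet> (M *v v) \<le> y \<bullet> (M *v y)"
    by (intro continuous_attains_inf compact_sphere) simp_all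
  then obtain v where v: "norm v = 1"
    and v_min: "\<And>y. norm y = 1 \<Longrightarrow> v \<bullet> (M *v v) \<le> y \<bullet> (M *v y)"
    by auto
  define m where "m = v \<bullet> (M *v v)"
  have lower: "m * (norm y)^2 \<le> y \<bullet> (M *v y)" for y
  proof (cases "y = 0")
    case False
    have "m \<le> (y /\<^sub>R norm y) \<bullet> (M *v (y /\<^sub>R norm y))"
      unfolding m_def using False by (intro v_min) simp
    also have "\<dots> = (y \<bullet> (M *v y)) / (norm y)^2"
      by (simp add: matrix_vector_mult_scaleR power2_eq_square field_simps)
    finally show ?thesis using False by (simp add: field_simps)
  qed simp
  define h where "h x = x \<bullet> (M *v x) - m * (norm x)^2" for x
  define d where "d = M *v v - m *\<^sub>R v"
  have h_nonneg: "h x \<ge> 0" for x using lower[of x] by (simp add: h_def)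
  have h_along_d: "h (v + e *\<^sub>R d) = 2 * e * (d \<bullet> d) + e^2 * h d" for e
  proof -
    have "(norm (v + e *\<^sub>R d))^2 = 1 + 2 * e * (d \<bullet> v) + e^2 * (norm d)^2"
      using v unfolding power2_norm_eq_inner norm_eq_1
      by (simp add: inner_add_left inner_add_right inner_commute algebra_simps power2_eq_square)
    moreover have "d \<bullet> (M *v v) = d \<bullet> d + m * (d \<bullet> v)"
      by (simp add: d_def inner_diff_right)
    ultimately show ?thesis
      unfolding h_def symmetric_quadratic_form_add[OF sym] using v by (simp add: m_def algebra_simps)
  qed
  have "d \<bullet> d = 0"
  proof (rule nonneg_quadratic_linear_coeff_zero[where b = "h d"])
    show "0 \<le> 2 * e * (d \<bullet> d) + e^2 * h d" for e
      using h_nonneg[of "v + e *\<^sub>R d"] by (simp only: h_along_d)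
  qed (simp_all add: h_nonneg)
  then have "M *v v = m *\<^sub>R v" by (simp add: d_def)
  moreover have "v \<noteq> 0" using v by auto
  ultimately show thesis using lower that by blast
qed

lemma min_eigenvalue_le_rayleigh:
  fixes M :: "real^'n^'n"
  assumes "transpose M = M"
  shows "min_eigenvalue M * (norm y)^2 \<le> y \<bullet> (M *v y)"
proof -
  obtain m v where "v \<noteq> 0" "M *v v = m *\<^sub>R v" and lower: "m * (norm y)^2 \<le> y \<bullet> (M *v y)"
    using symmetric_matrix_rayleigh_eigenvalue[OF assms] by metis
  then have "min_eigenvalue M \<le> m"
    unfolding min_eigenvalue_def by (intro Min_le finite_eigenvalues_symmetric assms) auto
  then have "min_eigenvalue M * (norm y)^2 \<le> m * (norm y)^2"
    by (simp add: mult_right_mono)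
  with lower show ?thesis by linarith
qed

lemma sum_matrix_vector_mult:
  "finite S \<Longrightarrow> (\<Sum>s\<in>S. A s) *v y = (\<Sum>s\<in>S. A s *v y)"
  by (induct rule: finite_induct) (simp_all add: matrix_vector_mult_add_rdistrib)

lemma transpose_Bmat: "transpose (Bmat rho phi) = Bmat rho phi"
  by (simp add: vec_eq_iff transpose_def Bmat_def outer_def mult.commute)

lemma inner_Bmat: "y \<bullet> (Bmat rho phi *v y) = (\<Sum>s\<in>UNIV. rho s * (phi s \<bullet> y)^2)"
proof -
  have "Bmat rho phi *v y = (\<Sum>s\<in>UNIV. (rho s * (phi s \<bullet> y)) *\<^sub>R phi s)"
    by (simp add: Bmat_def sum_matrix_vector_mult scaleR_matrix_vector_assoc[symmetric] outer_mult_vector)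
  then show ?thesis
    by (simp add: inner_sum_right inner_commute power2_eq_square mult.assoc)
qed

lemma min_eigenvalue_Bmat_le:
  "min_eigenvalue (Bmat rho phi) * (norm y)^2 \<le> (\<Sum>s\<in>UNIV. rho s * (phi s \<bullet> y)^2)"
  using min_eigenvalue_le_rayleigh[OF transpose_Bmat] by (simp add: inner_Bmat)

lemma sum_UNIV_triple:
  "(\<Sum>x\<in>UNIV. F x) = (\<Sum>s\<in>UNIV. \<Sum>a\<in>UNIV. \<Sum>s'\<in>UNIV. (F (s, a, s') :: real))"
  by (simp add: UNIV_Times_UNIV[symmetric] sum.cartesian_product del: UNIV_Times_UNIV)

lemma sum_pmf_state:
  fixes q :: "('s::finite \<times> 'a::finite \<times> 's) pmf"
  assumes q_law: "\<And>s a s'. pmf q (s, a, s') = rho s * pol s a * P s a s'"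
    and pol_sum: "\<And>s. (\<Sum>a\<in>UNIV. pol s a) = 1"
    and P_sum: "\<And>s a. (\<Sum>s'\<in>UNIV. P s a s') = 1"
  shows "(\<Sum>x\<in>UNIV. pmf q x * f (fst x)) = (\<Sum>s\<in>UNIV. rho s * f s)"
proof -
  have "(\<Sum>x\<in>UNIV. pmf q x * f (fst x))
      = (\<Sum>s\<in>UNIV. rho s * f s * (\<Sum>a\<in>UNIV. pol s a * (\<Sum>s'\<in>UNIV. P s a s')))"
    by (subst sum_UNIV_triple) (simp add: q_law sum_distrib_left mult_ac)
  then show ?thesis by (simp add: P_sum pol_sum)
qed

lemma sum_pmf_next_state:
  fixes q :: "('s::finite \<times> 'a::finite \<times> 's) pmf"
  assumes q_law: "\<And>s a s'. pmf q (s, a, s') = rho s * pol s a * P s a s'"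
    and rho_stationary: "\<And>s'. rho s' = (\<Sum>s\<in>UNIV. rho s * Ppi pol P $ s $ s')"
  shows "(\<Sum>x\<in>UNIV. pmf q x * f (snd (snd x))) = (\<Sum>s\<in>UNIV. rho s * f s)"
proof -
  have "(\<Sum>x\<in>UNIV. pmf q x * f (snd (snd x)))
      = (\<Sum>s\<in>UNIV. \<Sum>a\<in>UNIV. \<Sum>s'\<in>UNIV. f s' * (rho s * (pol s a * P s a s')))"
    by (subst sum_UNIV_triple) (simp add: q_law mult_ac)
  also have "\<dots> = (\<Sum>s'\<in>UNIV. \<Sum>s\<in>UNIV. \<Sum>a\<in>UNIV. f s' * (rho s * (pol s a * P s a s')))"
    by (subst sum.swap) (rule sum.cong[OF refl], rule sum.swap)
  also have "\<dots> = (\<Sum>s'\<in>UNIV. f s' * (\<Sum>s\<in>UNIV. rho s * Ppi pol P $ s $ s'))"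
    by (simp add: Ppi_def sum_distrib_left)
  finally show ?thesis by (simp flip: rho_stationary add: mult.commute)
qed

context
  fixes phi :: "'s::finite \<Rightarrow> real^'d::finite" and rho :: "'s \<Rightarrow> real"
    and q :: "('s \<times> 'a::finite \<times> 's) pmf" and Phimax beta g mu :: real
  assumes phi_bound: "\<And>s. norm (phi s) \<le> Phimax"
    and beta: "0 < beta" "beta < 1"
    and step_pos: "0 < g"
    and step_small: "g * ((1 + beta)^2 * Phimax^2) \<le> 1 - beta"
    and law_state: "\<And>f. (\<Sum>x\<in>UNIV. pmf q x * f (fst x)) = (\<Sum>s\<in>UNIV. rho s * f s)"
    and law_next_state: "\<And>f. (\<Sum>x\<in>UNIV. pmf q x * f (snd (snd x))) = (\<Sum>s\<in>UNIV. rho s * f s)"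
    and mu_le: "\<And>y. mu * (norm y)^2 \<le> (\<Sum>s\<in>UNIV. rho s * (phi s \<bullet> y)^2)"
begin

lemma expected_td_step_sq_le_energy:
  "(\<Sum>x\<in>UNIV. pmf q x * (norm ((mat 1 - g *\<^sub>R a_mat phi beta x) *v y))^2)
     \<le> (norm y)^2 - g * (2 * (1 - beta) - g * (1 + beta)^2 * Phimax^2)
         * (\<Sum>s\<in>UNIV. rho s * (phi s \<bullet> y)^2)"
proof -
  define c1 c2 where "c1 = - 2 * g + g * beta + g^2 * Phimax^2 * (1 + beta)"
    and "c2 = g * beta + g^2 * Phimax^2 * (1 + beta) * beta"
  have pointwise: "(norm ((mat 1 - g *\<^sub>R a_mat phi beta x) *v y))^2
      \<le> (norm y)^2 + c1 * (phi (fst x) \<bullet> y)^2 + c2 * (phi (snd (snd x)) \<bullet> y)^2" for x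
    using norm_td_step_sq_le[where phi = phi and s = "fst x" and a = "fst (snd x)" and s' = "snd (snd x)",
        OF phi_bound step_pos beta(1)]
    by (cases x) (simp add: c1_def c2_def)
  have "(\<Sum>x\<in>UNIV. pmf q x * (norm ((mat 1 - g *\<^sub>R a_mat phi beta x) *v y))^2)
      \<le> (\<Sum>x\<in>UNIV. pmf q x * ((norm y)^2 + c1 * (phi (fst x) \<bullet> y)^2 + c2 * (phi (snd (snd x)) \<bullet> y)^2))"
    by (intro sum_mono mult_left_mono pointwise) simp
  also have "\<dots> = (norm y)^2 * (\<Sum>x\<in>UNIV. pmf q x)
      + c1 * (\<Sum>x\<in>UNIV. pmf q x * (phi (fst x) \<bullet> y)^2)
      + c2 * (\<Sum>x\<in>UNIV. pmf q x * (phi (snd (snd x)) \<bullet> y)^2)"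
    by (simp add: sum.distrib sum_distrib_left sum_distrib_right algebra_simps)
  also have "\<dots> = (norm y)^2 + (c1 + c2) * (\<Sum>s\<in>UNIV. rho s * (phi s \<bullet> y)^2)"
    unfolding sum_pmf_eq_1[of UNIV q, simplified] law_state[of "\<lambda>s. (phi s \<bullet> y)^2"]
      law_next_state[of "\<lambda>s. (phi s \<bullet> y)^2"]
    by (simp add: algebra_simps)
  also have "c1 + c2 = - g * (2 * (1 - beta) - g * (1 + beta)^2 * Phimax^2)"
    by (simp add: c1_def c2_def power2_eq_square algebra_simps)
  finally show ?thesis by simp
qed

lemma expected_td_step_sq_le:
  "(\<Sum>x\<in>UNIV. pmf q x * (norm ((mat 1 - g *\<^sub>R a_mat phi beta x) *v y))^2)
     \<le> (1 - g * (1 - beta) * mu) * (norm y)^2"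
proof -
  define Q where "Q = (\<Sum>s\<in>UNIV. rho s * (phi s \<bullet> y)^2)"
  have Q_nonneg: "0 \<le> Q"
    unfolding Q_def law_state[of "\<lambda>s. (phi s \<bullet> y)^2", symmetric] by (intro sum_nonneg) simp
  have "g * (1 - beta) \<le> g * (2 * (1 - beta) - g * (1 + beta)^2 * Phimax^2)"
    using mult_left_mono[OF step_small less_imp_le[OF step_pos]] by (simp add: algebra_simps)
  from mult_right_mono[OF this Q_nonneg] expected_td_step_sq_le_energy[of y]
  have "(\<Sum>x\<in>UNIV. pmf q x * (norm ((mat 1 - g *\<^sub>R a_mat phi beta x) *v y))^2)
      \<le> (norm y)^2 - g * (1 - beta) * Q"
    unfolding Q_def by linarith
  also have "\<dots> \<le> (1 - g * (1 - beta) * mu) * (norm y)^2"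
    using mult_left_mono[OF mu_le[of y], of "g * (1 - beta)"] step_pos beta
    by (simp add: Q_def algebra_simps)
  finally show ?thesis .
qed

text \<open>Nonnegativity of the contraction factor comes for free: an expectation of squares is
  bounded by it times \<open>(norm y)^2\<close> for any \<open>y \<noteq> 0\<close>.\<close>
lemma td_contraction_factor_nonneg: "0 \<le> 1 - g * (1 - beta) * mu"
proof -
  let ?y = "vec 1 :: real^'d"
  have "0 \<le> (\<Sum>x\<in>UNIV. pmf q x * (norm ((mat 1 - g *\<^sub>R a_mat phi beta x) *v ?y))^2)"
    by (intro sum_nonneg) simp
  also have "\<dots> \<le> (1 - g * (1 - beta) * mu) * (norm ?y)^2"
    by (rule expected_td_step_sq_le)
  finally show ?thesis
    by (simp add: zero_le_mult_iff vec_eq_iff)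
qed

end

lemma nn_integral_measure_pmf_finite_UNIV:
  fixes q :: "'x::finite pmf"
  assumes "\<And>x. 0 \<le> f x"
  shows "(\<integral>\<^sup>+x. ennreal (f x) \<partial>measure_pmf q) = ennreal (\<Sum>x\<in>UNIV. pmf q x * f x)"
  using assms by (simp add: nn_integral_measure_pmf nn_integral_count_space_finite
      ennreal_mult sum_ennreal[symmetric])

lemma le_divide_imp_mult_le:
  fixes x a b :: real
  assumes "0 < x" "x \<le> a / b" "0 \<le> b"
  shows "x * b \<le> a"
  using assms by (cases "b = 0") (auto simp: pos_le_divide_eq)

lemma one_minus_power_le_exp:
  fixes x :: real
  assumes "0 \<le> 1 - x"
  shows "(1 - x) ^ t \<le> exp (- x * real t)"
proof -
  have "(1 - x) ^ t \<le> exp (- x) ^ t"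
    using assms exp_ge_add_one_self[of "- x"] by (intro power_mono) auto
  then show ?thesis by (simp add: exp_of_nat_mult[symmetric] mult.commute)
qed

lemma Cprod_cong:
  "(\<And>i. i \<in> {1..n} \<Longrightarrow> w i = w' i) \<Longrightarrow> Cprod phi beta g w n = Cprod phi beta g w' n"
  by (induct n) auto

lemma measurable_Cprod:
  fixes phi :: "'s \<Rightarrow> real^'d::finite" and q :: "('s \<times> 'a \<times> 's) pmf"
  assumes "{1..n} \<subseteq> I"
  shows "(\<lambda>w. Cprod phi beta g w n) \<in> borel_measurable (\<Pi>\<^sub>M i\<in>I. measure_pmf q)"
  using assms
proof (induct n)
  case (Suc n)
  have I: "Suc n \<in> I" "{1..n} \<subseteq> I" using Suc.prems by auto
  have step: "(\<lambda>w. mat 1 - g *\<^sub>R a_mat phi beta (w (Suc n))) \<in> borel_measurable (\<Pi>\<^sub>M i\<in>I. measure_pmf q)"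
    by (rule measurable_compose[OF measurable_component_singleton[OF I(1)]]) simp
  have "continuous_on UNIV (\<lambda>x :: (real^'d^'d) \<times> (real^'d^'d). fst x ** snd x)"
    unfolding matrix_matrix_mult_def by (intro continuous_intros)
  from borel_measurable_continuous_Pair[OF step Suc.hyps[OF I(2)] this] show ?case by simp
qed simp

lemma measurable_norm_Cprod_sq:
  fixes phi :: "'s \<Rightarrow> real^'d::finite" and q :: "('s \<times> 'a \<times> 's) pmf"
  assumes "{1..n} \<subseteq> I"
  shows "(\<lambda>w. ennreal ((norm (Cprod phi beta g w n *v z))^2)) \<in> borel_measurable (\<Pi>\<^sub>M i\<in>I. measure_pmf q)"
proof -
  have "continuous_on UNIV (\<lambda>A :: real^'d^'d. (norm (A *v z))^2)"
    unfolding matrix_vector_mult_def by (intro continuous_intros)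
  from borel_measurable_continuous_on[OF this measurable_Cprod[OF assms]]
  show ?thesis by measurable
qed

text \<open>The sample \<open>w (Suc n)\<close> is independent of \<open>Cprod \<dots> w n\<close>, so integrating it out first
  applies the one-step bound to the vector \<open>Cprod \<dots> w n *v z\<close>.\<close>
lemma nn_integral_Cprod_sq_le_finite:
  fixes phi :: "'s \<Rightarrow> real^'d::finite" and q :: "('s \<times> 'a \<times> 's) pmf"
  assumes step: "\<And>y. (\<integral>\<^sup>+x. ennreal ((norm ((mat 1 - g *\<^sub>R a_mat phi beta x) *v y))^2) \<partial>measure_pmf q)
      \<le> ennreal (c * (norm y)^2)"
    and c: "0 \<le> c"
  shows "(\<integral>\<^sup>+w. ennreal ((norm (Cprod phi beta g w n *v z))^2) \<partial>(\<Pi>\<^sub>M i\<in>{..n}. measure_pmf q))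
    \<le> ennreal (c^n * (norm z)^2)"
proof (induct n)
  case 0
  have "prob_space (\<Pi>\<^sub>M i\<in>{0::nat}. measure_pmf q)"
    by (rule prob_space_PiM) (simp add: measure_pmf.prob_space_axioms)
  then show ?case by (simp add: prob_space.emeasure_space_1)
next
  case (Suc n)
  interpret product_sigma_finite "\<lambda>_::nat. measure_pmf q"
    by (simp add: product_sigma_finite_def prob_space_imp_sigma_finite measure_pmf.prob_space_axioms)
  let ?N = "\<lambda>w. ennreal ((norm (Cprod phi beta g w n *v z))^2)"
  have "(\<integral>\<^sup>+w. ennreal ((norm (Cprod phi beta g w (Suc n) *v z))^2) \<partial>(\<Pi>\<^sub>M i\<in>{..Suc n}. measure_pmf q))
     = (\<integral>\<^sup>+w. \<integral>\<^sup>+x. ennreal ((norm (Cprod phi beta g (w(Suc n := x)) (Suc n) *v z))^2)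
          \<partial>measure_pmf q \<partial>(\<Pi>\<^sub>M i\<in>{..n}. measure_pmf q))"
  proof -
    have "(\<lambda>w. ennreal ((norm (Cprod phi beta g w (Suc n) *v z))^2))
        \<in> borel_measurable (\<Pi>\<^sub>M i\<in>insert (Suc n) {..n}. measure_pmf q)"
      by (rule measurable_norm_Cprod_sq) auto
    then show ?thesis
      unfolding atMost_Suc by (rule product_nn_integral_insert[rotated 2]) auto
  qed
  also have "\<dots> = (\<integral>\<^sup>+w. \<integral>\<^sup>+x. ennreal ((norm ((mat 1 - g *\<^sub>R a_mat phi beta x) *v (Cprod phi beta g w n *v z)))^2)
          \<partial>measure_pmf q \<partial>(\<Pi>\<^sub>M i\<in>{..n}. measure_pmf q))"
  proof -
    have update: "Cprod phi beta g (w(Suc n := x)) n = Cprod phi beta g w n" for w x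
      by (rule Cprod_cong) auto
    show ?thesis by (simp only: update matrix_vector_mul_assoc[symmetric] Cprod.simps fun_upd_same)
  qed
  also have "\<dots> \<le> (\<integral>\<^sup>+w. ennreal c * ?N w \<partial>(\<Pi>\<^sub>M i\<in>{..n}. measure_pmf q))"
    using step c by (intro nn_integral_mono) (simp add: ennreal_mult)
  also have "\<dots> = ennreal c * (\<integral>\<^sup>+w. ?N w \<partial>(\<Pi>\<^sub>M i\<in>{..n}. measure_pmf q))"
    by (rule nn_integral_cmult, rule measurable_norm_Cprod_sq) auto
  also have "\<dots> \<le> ennreal c * ennreal (c^n * (norm z)^2)"
    by (intro mult_left_mono Suc.hyps) auto
  also have "\<dots> = ennreal (c^Suc n * (norm z)^2)"
    using c by (simp add: ennreal_mult[symmetric] mult_ac)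
  finally show ?case .
qed

lemma nn_integral_Cprod_sq_le:
  fixes phi :: "'s \<Rightarrow> real^'d::finite" and q :: "('s \<times> 'a \<times> 's) pmf"
  assumes "\<And>y. (\<integral>\<^sup>+x. ennreal ((norm ((mat 1 - g *\<^sub>R a_mat phi beta x) *v y))^2) \<partial>measure_pmf q)
      \<le> ennreal (c * (norm y)^2)"
    and "0 \<le> c"
  shows "(\<integral>\<^sup>+w. ennreal ((norm (Cprod phi beta g w n *v z))^2) \<partial>(\<Pi>\<^sub>M i\<in>UNIV. measure_pmf q))
    \<le> ennreal (c^n * (norm z)^2)"
proof -
  interpret product_prob_space "\<lambda>_::nat. measure_pmf q" UNIV
    by (simp add: product_prob_space_def product_prob_space_axioms_def product_sigma_finite_def
        prob_space_imp_sigma_finite measure_pmf.prob_space_axioms)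
  let ?N = "\<lambda>w. ennreal ((norm (Cprod phi beta g w n *v z))^2)"
  have "(\<integral>\<^sup>+w. ?N w \<partial>(\<Pi>\<^sub>M i\<in>UNIV. measure_pmf q))
      = (\<integral>\<^sup>+w. ?N (restrict w {..n}) \<partial>(\<Pi>\<^sub>M i\<in>UNIV. measure_pmf q))"
  proof -
    have restrict: "Cprod phi beta g (restrict w {..n}) n = Cprod phi beta g w n" for w
      by (rule Cprod_cong) auto
    show ?thesis by (simp only: restrict)
  qed
  also have "\<dots> = (\<integral>\<^sup>+w. ?N w \<partial>distr (\<Pi>\<^sub>M i\<in>UNIV. measure_pmf q) (\<Pi>\<^sub>M i\<in>{..n}. measure_pmf q)
      (\<lambda>w. restrict w {..n}))"
  proof -
    have "?N \<in> borel_measurable (\<Pi>\<^sub>M i\<in>{..n}. measure_pmf q)"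
      by (rule measurable_norm_Cprod_sq) auto
    then have "?N \<in> borel_measurable (distr (\<Pi>\<^sub>M i\<in>UNIV. measure_pmf q) (\<Pi>\<^sub>M i\<in>{..n}. measure_pmf q)
        (\<lambda>w. restrict w {..n}))"
      by simp
    from nn_integral_distr[OF measurable_restrict_subset[OF subset_UNIV] this] show ?thesis by simp
  qed
  also have "\<dots> = (\<integral>\<^sup>+w. ?N w \<partial>(\<Pi>\<^sub>M i\<in>{..n}. measure_pmf q))"
    by (simp add: distr_PiM_restrict_finite)
  also have "\<dots> \<le> ennreal (c^n * (norm z)^2)"
    by (rule nn_integral_Cprod_sq_le_finite[OF assms])
  finally show ?thesis .
qed

lemma measurable_initial_Cprod_sq:
  fixes phi :: "'s \<Rightarrow> real^'d::finite" and q :: "('s \<times> 'a \<times> 's) pmf"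
    and Theta :: "(real^'d) measure"
  assumes Theta_sets: "sets Theta = sets borel"
  shows "(\<lambda>(th, w). ennreal ((norm (Cprod phi beta g w n *v (th - z)))^2))
    \<in> borel_measurable (Theta \<Otimes>\<^sub>M (\<Pi>\<^sub>M i\<in>UNIV. measure_pmf q))"
proof -
  let ?W = "\<Pi>\<^sub>M i\<in>(UNIV :: nat set). measure_pmf q"
  have fst: "fst \<in> borel_measurable (Theta \<Otimes>\<^sub>M ?W)"
    using measurable_fst[of Theta ?W] by (simp add: measurable_cong_sets[OF refl Theta_sets])
  have snd: "(\<lambda>p. Cprod phi beta g (snd p) n) \<in> borel_measurable (Theta \<Otimes>\<^sub>M ?W)"
    by (rule measurable_compose[OF measurable_snd measurable_Cprod]) simp
  have "continuous_on UNIV (\<lambda>x :: (real^'d) \<times> (real^'d^'d). (norm (snd x *v (fst x - z)))^2)"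
    unfolding matrix_vector_mult_def by (intro continuous_intros)
  from borel_measurable_continuous_Pair[OF fst snd this]
  have "(\<lambda>p. (norm (Cprod phi beta g (snd p) n *v (fst p - z)))^2) \<in> borel_measurable (Theta \<Otimes>\<^sub>M ?W)"
    by simp
  then show ?thesis by (simp add: case_prod_beta')
qed

lemma nn_integral_initial_Cprod_sq_le:
  fixes phi :: "'s \<Rightarrow> real^'d::finite" and q :: "('s \<times> 'a \<times> 's) pmf"
    and Theta :: "(real^'d) measure"
  assumes Theta_sets: "sets Theta = sets borel"
    and step: "\<And>y. (\<integral>\<^sup>+x. ennreal ((norm ((mat 1 - g *\<^sub>R a_mat phi beta x) *v y))^2) \<partial>measure_pmf q)
      \<le> ennreal (c * (norm y)^2)"
    and c: "0 \<le> c"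
  shows "(\<integral>\<^sup>+(th, w). ennreal ((norm (Cprod phi beta g w n *v (th - z)))^2)
      \<partial>(Theta \<Otimes>\<^sub>M (\<Pi>\<^sub>M i\<in>UNIV. measure_pmf q)))
    \<le> ennreal (c^n) * (\<integral>\<^sup>+th. ennreal ((norm (th - z))^2) \<partial>Theta)"
proof -
  let ?W = "\<Pi>\<^sub>M i\<in>(UNIV :: nat set). measure_pmf q"
  interpret W: prob_space ?W
    by (rule prob_space_PiM) (simp add: measure_pmf.prob_space_axioms)
  have "(\<integral>\<^sup>+(th, w). ennreal ((norm (Cprod phi beta g w n *v (th - z)))^2) \<partial>(Theta \<Otimes>\<^sub>M ?W))
      = (\<integral>\<^sup>+th. \<integral>\<^sup>+w. ennreal ((norm (Cprod phi beta g w n *v (th - z)))^2) \<partial>?W \<partial>Theta)"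
    using W.nn_integral_fst[OF measurable_initial_Cprod_sq[OF Theta_sets]] by simp
  also have "\<dots> \<le> (\<integral>\<^sup>+th. ennreal (c^n) * ennreal ((norm (th - z))^2) \<partial>Theta)"
    using nn_integral_Cprod_sq_le[OF step c] c by (intro nn_integral_mono) (simp add: ennreal_mult)
  also have "\<dots> = ennreal (c^n) * (\<integral>\<^sup>+th. ennreal ((norm (th - z))^2) \<partial>Theta)"
    by (rule nn_integral_cmult) (simp add: measurable_cong_sets[OF Theta_sets refl])
  finally show ?thesis .
qed

theorem mainTheorem11:
  fixes pol :: "'s::finite \<Rightarrow> 'a::finite \<Rightarrow> real"
    and P :: "'s \<Rightarrow> 'a \<Rightarrow> 's \<Rightarrow> real"
    and r :: "'s \<Rightarrow> 'a \<Rightarrow> real"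
    and Rmax beta gamma Phimax mu' :: real
    and rho :: "'s \<Rightarrow> real"
    and phi :: "'s \<Rightarrow> real^'d::finite"
    and q :: "('s \<times> 'a \<times> 's) pmf"
    and Theta :: "(real^'d) measure"
    and t :: nat
  assumes pol_nonneg: "\<And>s a. pol s a \<ge> 0"
    and pol_sum: "\<And>s. (\<Sum>a\<in>UNIV. pol s a) = 1"
    and P_nonneg: "\<And>s a s'. P s a s' \<ge> 0"
    and P_sum: "\<And>s a. (\<Sum>s'\<in>UNIV. P s a s') = 1"
    and r_bound: "\<And>s a. \<bar>r s a\<bar> \<le> Rmax"
    and beta: "0 < beta" "beta < 1"
    and irreducible: "\<And>s s'. (s, s') \<in> {(x, y). Ppi pol P $ x $ y > 0}\<^sup>+"
    and rho_nonneg: "\<And>s. rho s \<ge> 0"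
    and rho_sum: "(\<Sum>s\<in>UNIV. rho s) = 1"
    and rho_stationary: "\<And>s'. rho s' = (\<Sum>s\<in>UNIV. rho s * Ppi pol P $ s $ s')"
    and phi_bound: "\<And>s. norm (phi s) \<le> Phimax"
    and full_rank: "rank (Phimat phi) = CARD('d)"
    and mu'_def: "mu' = min_eigenvalue (Bmat rho phi)"
    and mu'_pos: "mu' > 0"
    and q_law: "\<And>s a s'. pmf q (s, a, s') = rho s * pol s a * P s a s'"
    and Theta_prob: "prob_space Theta"
    and Theta_sets: "sets Theta = sets borel"
    and gamma: "0 < gamma" "gamma \<le> (1 - beta) / ((1 + beta)^2 * Phimax^2)"
    and t: "t \<ge> 1"
  shows "(\<integral>\<^sup>+ (th, w). ennreal ((norm (Cprod phi beta gamma w t *v (th - theta_star pol P r rho phi beta)))^2)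
            \<partial>(Theta \<Otimes>\<^sub>M (\<Pi>\<^sub>M i\<in>UNIV. measure_pmf q)))
         \<le> ennreal ((1 - gamma * (1 - beta) * mu') ^ t)
            * (\<integral>\<^sup>+ th. ennreal ((norm (th - theta_star pol P r rho phi beta))^2) \<partial>Theta)
       \<and> ennreal ((1 - gamma * (1 - beta) * mu') ^ t)
            * (\<integral>\<^sup>+ th. ennreal ((norm (th - theta_star pol P r rho phi beta))^2) \<partial>Theta)
         \<le> ennreal (exp (- gamma * (1 - beta) * mu' * real t))
            * (\<integral>\<^sup>+ th. ennreal ((norm (th - theta_star pol P r rho phi beta))^2) \<partial>Theta)"
proof -
  \<comment> \<open>Only the sampling law, stationarity of \<open>rho\<close>, the feature bound and the step size
    enter the argument.\<close>
  have step_small: "gamma * ((1 + beta)^2 * Phimax^2) \<le> 1 - beta"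
    using gamma by (intro le_divide_imp_mult_le) auto
  have mu: "\<And>y. mu' * (norm y)^2 \<le> (\<Sum>s\<in>UNIV. rho s * (phi s \<bullet> y)^2)"
    unfolding mu'_def by (rule min_eigenvalue_Bmat_le)
  note setting = phi_bound beta gamma(1) step_small sum_pmf_state[OF q_law pol_sum P_sum]
    sum_pmf_next_state[OF q_law rho_stationary] mu
  define c where "c = 1 - gamma * (1 - beta) * mu'"
  have c: "0 \<le> c"
    using td_contraction_factor_nonneg[OF setting] by (simp add: c_def)
  have step: "(\<integral>\<^sup>+x. ennreal ((norm ((mat 1 - gamma *\<^sub>R a_mat phi beta x) *v y))^2) \<partial>measure_pmf q)
      \<le> ennreal (c * (norm y)^2)" for y
    unfolding nn_integral_measure_pmf_finite_UNIV[OF zero_le_power2] c_def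
    by (intro ennreal_leI expected_td_step_sq_le[OF setting])
  have "c ^ t \<le> exp (- gamma * (1 - beta) * mu' * real t)"
    using one_minus_power_le_exp[of "gamma * (1 - beta) * mu'" t] c by (simp add: c_def)
  then show ?thesis
    using nn_integral_initial_Cprod_sq_le[OF Theta_sets step c]
    by (auto simp: c_def intro: mult_right_mono)
qed

end
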